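(* Let $(X,d,\mathfrak{m})$ be a very strict $CD(K,N)$-space ($K\in\mathbb{R}$, $N\in(1,\infty]$), let $\mu_0,\mu_1\in\mathcal{P}_2^{ac}(X)$ have bounded supports, and let $\pi\in\mathrm{OptGeo}(\mu_0,\mu_1)$ be a plan as provided by the definition of very strict $CD(K,N)$-space (i.e. satisfying the convexity inequality below for every admissible $F$, $t_1<t_2$ and $t$). Then $\mu_t:=(e_t)_\#\pi\in\mathcal{P}_2^{ac}(X)$ for all $t\in(0,1)$.
   Context: Standing assumptions: $(X,d)$ complete and separable, $\mathfrak{m}$ a locally finite Borel measure. $\mathrm{Geo}(X)$: constant speed geodesics $\gamma\colon[0,1]\to X$ with sup metric; $e_t(\gamma)=\gamma_t$. $\mathcal{P}_2(X)$: Borel probability measures with finite second moment; $\mathcal{P}_2^{ac}(X)$: those $\ll\mathfrak{m}$. $\mathrm{OptGeo}(\mu_0,\mu_1)$: $\pi\in\mathcal{P}(\mathrm{Geo}(X))$ with $(e_0,e_1)_\#\pi$ an optimal coupling for cost $d^2$. $\mathrm{restr}_{t_1}^{t_2}(\gamma)(t)=\gamma(tt_2+(1-t)t_1)$; $\pi^{-1}$ is the pushforward of $\pi$ under $\gamma\mapsto\gamma(1-\cdot)$. $\sigma^{(t)}_{K,N}(\theta)$ ($N\in(0,\infty]$): $=t$ if $N=\infty$ or $K=0$; $=\infty$ if $K\theta^2\ge N\pi^2$; $=\sin(t\theta\sqrt{K/N})/\sin(\theta\sqrt{K/N})$ if $0<K\theta^2<N\pi^2$; $=\sinh(t\theta\sqrt{-K/N})/\sinh(\theta\sqrt{-K/N})$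 if $K<0$. For $N\in(1,\infty)$, $t>0$: $\beta^{(t)}_{K,N}(\theta)=t^{1-N}(\sigma^{(t)}_{K,N-1}(\theta))^{N-1}$; $\beta^{(t)}_{K,\infty}(\theta)=e^{\frac K6(1-t^2)\theta^2}$; $\beta^{(0)}_{K,N}\equiv1$. For $\mu=\rho\mathfrak{m}+\mu^\perp$: $\mathrm{Ent}_N(\mu)=-\int\rho^{1-1/N}d\mathfrak{m}$ ($N<\infty$), $\mathrm{Ent}_\infty(\mu)=\int\rho\log\rho\,d\mathfrak{m}+\infty\cdot\mu^\perp(X)$. For $\pi$ with $(e_0)_\#\pi=\mu_0=\rho_0\mathfrak{m}+\mu_0^\perp$: $\mathrm{Ent}^{(t)}_{N,\pi}(\mu_0)=-\int(\beta^{(t)}_{K,N}(d(\gamma_0,\gamma_1)))^{1/N}\rho_0(\gamma_0)^{-1/N}d\pi$ ($N<\infty$), $\mathrm{Ent}^{(t)}_{\infty,\pi}(\mu_0)=\int\log(\rho_0(\gamma_0)/\beta^{(t)}_{K,\infty}(d(\gamma_0,\gamma_1)))d\pi+\infty\cdot\mu_0^\perp(X)$. Very strict $CD(K,N)$: for all $\mu_0,\mu_1\in\mathcal{P}_2^{ac}(X)$ with bounded supports there exists $\pi\in\mathrm{OptGeo}(\mu_0,\mu_1)$ such that for all bounded non-negative Borel $F$ on $\mathrm{Geo}(X)$ with $\int Fd\pi=1$, all $0\le t_1<t_2\le1$ and all $t\in[0,1]$, with $\tilde\pi=(\mathrm{restr}_{t_1}^{t_2})_\#(F\pi)$, $\tilde\mu_t=(e_t)_\#\tilde\pi$: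 $\mathrm{Ent}_N(\tilde\mu_t)\le(1-t)\mathrm{Ent}^{(1-t)}_{N,\tilde\pi}(\tilde\mu_0)+t\,\mathrm{Ent}^{(t)}_{N,\tilde\pi^{-1}}(\tilde\mu_1)$. *)

theory Defs
  imports "HOL-Probability.Probability"
begin

text \<open>X is a type of class polish_space (complete, separable metric space), d = dist,
  and the reference measure m is a Borel measure that is locally finite.\<close>

definition locally_finite_borel :: "'a::metric_space measure \<Rightarrow> bool" where
  "locally_finite_borel m \<longleftrightarrow> sets m = sets borel \<and>
     (\<forall>x. \<exists>e>0. emeasure m (ball x e) < \<infinity>)"

definition prob_borel :: "'a::topological_space measure \<Rightarrow> bool" where
  "prob_borel \<mu> \<longleftrightarrow> prob_space \<mu> \<and> sets \<mu> = sets borel"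

definition P2 :: "'a::metric_space measure \<Rightarrow> bool" where
  "P2 \<mu> \<longleftrightarrow> prob_borel \<mu> \<and> (\<exists>x0. (\<integral>\<^sup>+ x. ennreal ((dist x x0)\<^sup>2) \<partial>\<mu>) < \<infinity>)"

definition P2ac :: "'a::metric_space measure \<Rightarrow> 'a measure \<Rightarrow> bool" where
  "P2ac m \<mu> \<longleftrightarrow> P2 \<mu> \<and> absolutely_continuous m \<mu>"

definition msupp :: "'a::metric_space measure \<Rightarrow> 'a set" where
  "msupp \<mu> = {x. \<forall>e>0. emeasure \<mu> (ball x e) > 0}"

definition bounded_support :: "'a::metric_space measure \<Rightarrow> bool" where
  "bounded_support \<mu> \<longleftrightarrow> bounded (msupp \<mu>)"

definition coupling :: "'a::metric_space measure \<Rightarrow> 'a measure \<Rightarrow> ('a \<times> 'a) measure \<Rightarrow> bool" where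
  "coupling \<mu>0 \<mu>1 \<gamma> \<longleftrightarrow> prob_borel \<gamma> \<and>
     distr \<gamma> borel fst = \<mu>0 \<and> distr \<gamma> borel snd = \<mu>1"

definition transport_cost :: "('a::metric_space \<times> 'a) measure \<Rightarrow> ennreal" where
  "transport_cost \<gamma> = (\<integral>\<^sup>+ p. ennreal ((dist (fst p) (snd p))\<^sup>2) \<partial>\<gamma>)"

definition optimal_coupling :: "'a::metric_space measure \<Rightarrow> 'a measure \<Rightarrow> ('a \<times> 'a) measure \<Rightarrow> bool" where
  "optimal_coupling \<mu>0 \<mu>1 \<gamma> \<longleftrightarrow> coupling \<mu>0 \<mu>1 \<gamma> \<and>
     (\<forall>\<gamma>'. coupling \<mu>0 \<mu>1 \<gamma>' \<longrightarrow> transport_cost \<gamma> \<le> transport_cost \<gamma>')"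

text \<open>A curve [0,1] -> X is represented by a bounded continuous function on the reals
  that is constant outside [0,1] (extended via clamping); the metric of the type
  real =>C a is then exactly the sup metric on [0,1].\<close>

definition clamp01 :: "real \<Rightarrow> real" where
  "clamp01 t = max 0 (min 1 t)"

definition Geo :: "(real \<Rightarrow>\<^sub>C 'a::metric_space) set" where
  "Geo = {\<gamma>. (\<forall>t. apply_bcontfun \<gamma> t = apply_bcontfun \<gamma> (clamp01 t)) \<and>
     (\<forall>s\<in>{0..1}. \<forall>t\<in>{0..1}. dist (apply_bcontfun \<gamma> s) (apply_bcontfun \<gamma> t)
        = \<bar>s - t\<bar> * dist (apply_bcontfun \<gamma> 0) (apply_bcontfun \<gamma> 1))}"

definition GeoM :: "(real \<Rightarrow>\<^sub>C 'a::metric_space) measure" where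
  "GeoM = restrict_space borel Geo"

definition eval_at :: "real \<Rightarrow> (real \<Rightarrow>\<^sub>C 'a::metric_space) \<Rightarrow> 'a" where
  "eval_at t \<gamma> = apply_bcontfun \<gamma> t"

definition restr :: "real \<Rightarrow> real \<Rightarrow> (real \<Rightarrow>\<^sub>C 'a::metric_space) \<Rightarrow> (real \<Rightarrow>\<^sub>C 'a)" where
  "restr t1 t2 \<gamma> = Bcontfun (\<lambda>t. apply_bcontfun \<gamma> (clamp01 t * t2 + (1 - clamp01 t) * t1))"

definition reverse_geo :: "(real \<Rightarrow>\<^sub>C 'a::metric_space) \<Rightarrow> (real \<Rightarrow>\<^sub>C 'a)" where
  "reverse_geo \<gamma> = Bcontfun (\<lambda>t. apply_bcontfun \<gamma> (1 - t))"

definition plan_inv :: "(real \<Rightarrow>\<^sub>C 'a::metric_space) measure \<Rightarrow> (real \<Rightarrow>\<^sub>C 'a) measure" where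
  "plan_inv \<pi> = distr \<pi> GeoM reverse_geo"

definition OptGeo :: "'a::metric_space measure \<Rightarrow> 'a measure \<Rightarrow> (real \<Rightarrow>\<^sub>C 'a) measure \<Rightarrow> bool" where
  "OptGeo \<mu>0 \<mu>1 \<pi> \<longleftrightarrow> prob_space \<pi> \<and> sets \<pi> = sets GeoM \<and>
     optimal_coupling \<mu>0 \<mu>1 (distr \<pi> borel (\<lambda>\<gamma>. (eval_at 0 \<gamma>, eval_at 1 \<gamma>)))"

text \<open>sigma^{(t)}_{K,N}(theta) for real N > 0, with value infinity allowed.
  At theta = 0 (where the quotient formulas read 0/0) the value is t.\<close>

definition sigma_KN :: "real \<Rightarrow> real \<Rightarrow> real \<Rightarrow> real \<Rightarrow> ennreal" where
  "sigma_KN K N t \<theta> =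
    (if K = 0 then ennreal t
     else if K * \<theta>\<^sup>2 \<ge> N * pi\<^sup>2 then \<top>
     else if \<theta> = 0 then ennreal t
     else if K > 0 then ennreal (sin (t * \<theta> * sqrt (K / N)) / sin (\<theta> * sqrt (K / N)))
     else ennreal (sinh (t * \<theta> * sqrt (- K / N)) / sinh (\<theta> * sqrt (- K / N))))"

definition enn_powr :: "ennreal \<Rightarrow> real \<Rightarrow> ennreal" where
  "enn_powr x p = (if x = \<top> then \<top> else ennreal (enn2real x powr p))"

definition beta_KN :: "real \<Rightarrow> ereal \<Rightarrow> real \<Rightarrow> real \<Rightarrow> ennreal" where
  "beta_KN K N t \<theta> =
    (if t = 0 then 1
     else if N = \<infinity> then ennreal (exp (K / 6 * (1 - t\<^sup>2) * \<theta>\<^sup>2))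
     else ennreal (t powr (1 - real_of_ereal N)) *
            enn_powr (sigma_KN K (real_of_ereal N - 1) t \<theta>) (real_of_ereal N - 1))"

definition lebesgue_dec :: "'a::topological_space measure \<Rightarrow> 'a measure \<Rightarrow> ('a \<Rightarrow> real) \<Rightarrow> 'a set \<Rightarrow> bool" where
  "lebesgue_dec m \<mu> \<rho> S \<longleftrightarrow> \<rho> \<in> borel_measurable borel \<and> (\<forall>x. 0 \<le> \<rho> x) \<and>
     S \<in> sets borel \<and> emeasure m S = 0 \<and>
     (\<forall>A\<in>sets borel. emeasure \<mu> A = (\<integral>\<^sup>+ x\<in>A. ennreal (\<rho> x) \<partial>m) + emeasure \<mu> (A \<inter> S))"

definition ld_rho :: "'a::topological_space measure \<Rightarrow> 'a measure \<Rightarrow> 'a \<Rightarrow> real" where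
  "ld_rho m \<mu> = fst (SOME p. lebesgue_dec m \<mu> (fst p) (snd p))"

definition ld_S :: "'a::topological_space measure \<Rightarrow> 'a measure \<Rightarrow> 'a set" where
  "ld_S m \<mu> = snd (SOME p. lebesgue_dec m \<mu> (fst p) (snd p))"

text \<open>Extended integral of a real function: positive part minus negative part
  (Isabelle's ereal convention infinity - infinity = infinity applies).\<close>
definition ext_integral :: "'b measure \<Rightarrow> ('b \<Rightarrow> real) \<Rightarrow> ereal" where
  "ext_integral M f = enn2ereal (\<integral>\<^sup>+ x. ennreal (f x) \<partial>M) - enn2ereal (\<integral>\<^sup>+ x. ennreal (- f x) \<partial>M)"

definition Ent :: "'a::topological_space measure \<Rightarrow> ereal \<Rightarrow> 'a measure \<Rightarrow> ereal" where
  "Ent m N \<mu> =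
    (if N = \<infinity> then
       (if emeasure \<mu> (ld_S m \<mu>) > 0 then \<infinity>
        else ext_integral m (\<lambda>x. ld_rho m \<mu> x * ln (ld_rho m \<mu> x)))
     else - enn2ereal (\<integral>\<^sup>+ x. ennreal (ld_rho m \<mu> x powr (1 - 1 / real_of_ereal N)) \<partial>m))"

text \<open>Ent^{(t)}_{N,pi}(mu_0) with mu_0 = (e_0)_# pi.  For finite N the singular part
  of mu_0 does not contribute (rho_0^{-1/N} = 0 there, rho_0 = d mu_0/d m = \<infinity>);
  0^{-1/N} = \<infinity>.\<close>
definition Ent_plan :: "'a::metric_space measure \<Rightarrow> real \<Rightarrow> ereal \<Rightarrow> real \<Rightarrow> (real \<Rightarrow>\<^sub>C 'a) measure \<Rightarrow> ereal" where
  "Ent_plan m K N t \<pi> =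
    (let \<mu>0 = distr \<pi> borel (eval_at 0); \<rho> = ld_rho m \<mu>0; S = ld_S m \<mu>0 in
     if N = \<infinity> then
       (if emeasure \<mu>0 S > 0 then \<infinity>
        else ext_integral \<pi> (\<lambda>\<gamma>. ln (\<rho> (eval_at 0 \<gamma>) /
                  enn2real (beta_KN K N t (dist (eval_at 0 \<gamma>) (eval_at 1 \<gamma>))))))
     else - enn2ereal (\<integral>\<^sup>+ \<gamma>. (if eval_at 0 \<gamma> \<in> S then 0 else
              enn_powr (beta_KN K N t (dist (eval_at 0 \<gamma>) (eval_at 1 \<gamma>))) (1 / real_of_ereal N) *
              (if \<rho> (eval_at 0 \<gamma>) = 0 then \<top> else ennreal (\<rho> (eval_at 0 \<gamma>) powr (- 1 / real_of_ereal N)))) \<partial>\<pi>))"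

definition vs_CD_plan :: "'a::metric_space measure \<Rightarrow> real \<Rightarrow> ereal \<Rightarrow> (real \<Rightarrow>\<^sub>C 'a) measure \<Rightarrow> bool" where
  "vs_CD_plan m K N \<pi> \<longleftrightarrow>
    (\<forall>F::(real \<Rightarrow>\<^sub>C 'a) \<Rightarrow> real.
       F \<in> borel_measurable GeoM \<and> (\<forall>\<gamma>. 0 \<le> F \<gamma>) \<and> (\<exists>C. \<forall>\<gamma>. F \<gamma> \<le> C) \<and>
       (\<integral>\<^sup>+ \<gamma>. ennreal (F \<gamma>) \<partial>\<pi>) = 1 \<longrightarrow>
       (\<forall>t1 t2 t. 0 \<le> t1 \<and> t1 < t2 \<and> t2 \<le> 1 \<and> 0 \<le> t \<and> t \<le> 1 \<longrightarrow>
         (let \<pi>' = distr (density \<pi> (\<lambda>\<gamma>. ennreal (F \<gamma>))) GeoM (restr t1 t2) in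
          Ent m N (distr \<pi>' borel (eval_at t))
            \<le> ereal (1 - t) * Ent_plan m K N (1 - t) \<pi>'
              + ereal t * Ent_plan m K N t (plan_inv \<pi>'))))"

definition very_strict_CD :: "'a::metric_space measure \<Rightarrow> real \<Rightarrow> ereal \<Rightarrow> bool" where
  "very_strict_CD m K N \<longleftrightarrow>
    (\<forall>\<mu>0 \<mu>1. P2ac m \<mu>0 \<and> P2ac m \<mu>1 \<and> bounded_support \<mu>0 \<and> bounded_support \<mu>1 \<longrightarrow>
       (\<exists>\<pi>. OptGeo \<mu>0 \<mu>1 \<pi> \<and> vs_CD_plan m K N \<pi>))"

end

(*
  If the intermediate marginal mu_t charged an m-null Borel set B, condition pi on the
  geodesics with gamma_t in B whose end densities and length are bounded by some n (this
  set still has positive measure).  The resulting plan P is admissible in the very strict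
  CD(K,N) condition with t1 = 0, t2 = 1.  Its time-t marginal is concentrated on B, so
  Ent_N takes its largest possible value there (+infinity for N = infinity, 0 otherwise),
  whereas the bounded end densities make both entropies on the right-hand side strictly
  smaller (finite, resp. negative).  This contradicts the convexity inequality.
  Finiteness of the second moment follows from
  d(gamma_t, a) <= 2 d(gamma_0, a) + d(gamma_1, b) + d(a, b).
*)
theory Submission
  imports Defs
begin

section \<open>Geodesics and plans\<close>

lemma space_GeoM [simp]: "space GeoM = Geo"
  by (simp add: GeoM_def space_restrict_space)

lemma continuous_on_eval_at: "continuous_on UNIV (eval_at t :: (real \<Rightarrow>\<^sub>C 'a::metric_space) \<Rightarrow> 'a)"
  unfolding continuous_on_iff eval_at_def
  using dist_bounded le_less_trans by blast

lemma measurable_eval_at_borel [measurable]: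
  "eval_at t \<in> borel_measurable (borel :: (real \<Rightarrow>\<^sub>C 'a::metric_space) measure)"
  by (rule borel_measurable_continuous_onI[OF continuous_on_eval_at])

lemma measurable_eval_at_GeoM [measurable]:
  "eval_at t \<in> borel_measurable (GeoM :: (real \<Rightarrow>\<^sub>C 'a::metric_space) measure)"
  unfolding GeoM_def by (rule measurable_restrict_space1[OF measurable_eval_at_borel])

lemma measurable_eval_at_plan:
  "sets \<pi> = sets GeoM \<Longrightarrow> eval_at t \<in> borel_measurable \<pi>"
  using measurable_cong_sets measurable_eval_at_GeoM by blast

lemma prob_space_distr_eval_at:
  "prob_space \<pi> \<Longrightarrow> sets \<pi> = sets GeoM \<Longrightarrow> prob_space (distr \<pi> borel (eval_at t))"
  by (rule prob_space.prob_space_distr[OF _ measurable_eval_at_plan])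

lemma Geo_dist:
  "\<gamma> \<in> Geo \<Longrightarrow> s \<in> {0..1} \<Longrightarrow> t \<in> {0..1} \<Longrightarrow>
     dist (eval_at s \<gamma>) (eval_at t \<gamma>) = \<bar>s - t\<bar> * dist (eval_at 0 \<gamma>) (eval_at 1 \<gamma>)"
  unfolding Geo_def eval_at_def by blast

lemma Geo_dist_start_le:
  assumes "\<gamma> \<in> Geo" "t \<in> {0..1}"
  shows "dist (eval_at t \<gamma>) (eval_at 0 \<gamma>) \<le> dist (eval_at 0 \<gamma>) (eval_at 1 \<gamma>)"
  using Geo_dist[OF assms(1,2), of 0] assms(2) by (simp add: mult_left_le_one_le)

lemma Geo_dist_eval_at_sq_le:
  assumes g: "\<gamma> \<in> Geo" and t: "t \<in> {0..1}"
  shows "(dist (eval_at t \<gamma>) a)\<^sup>2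
           \<le> 6 * (dist (eval_at 0 \<gamma>) a)\<^sup>2 + 6 * (dist (eval_at 1 \<gamma>) b)\<^sup>2 + 6 * (dist a b)\<^sup>2"
proof -
  define u v w where "u = dist (eval_at 0 \<gamma>) a" and "v = dist (eval_at 1 \<gamma>) b" and "w = dist a b"
  have "dist (eval_at 0 \<gamma>) (eval_at 1 \<gamma>) \<le> u + w + v"
    using dist_triangle[of "eval_at 0 \<gamma>" "eval_at 1 \<gamma>" a] dist_triangle[of a "eval_at 1 \<gamma>" b]
      dist_commute[of b "eval_at 1 \<gamma>"]
    unfolding u_def v_def w_def by linarith
  then have "dist (eval_at t \<gamma>) a \<le> 2 * u + v + w"
    using Geo_dist_start_le[OF g t] dist_triangle[of "eval_at t \<gamma>" a "eval_at 0 \<gamma>"]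
    unfolding u_def by linarith
  then have "(dist (eval_at t \<gamma>) a)\<^sup>2 \<le> (2 * u + v + w)\<^sup>2"
    by (intro power_mono) auto
  also have "\<dots> \<le> 6 * u\<^sup>2 + 6 * v\<^sup>2 + 6 * w\<^sup>2"
    using sum_squares_ge_zero[of "u - 2 * v" "u - 2 * w"] zero_le_power2[of "v - w"]
    by (simp add: power2_eq_square algebra_simps)
  finally show ?thesis
    unfolding u_def v_def w_def .
qed

lemma restr_0_1:
  assumes "\<gamma> \<in> Geo"
  shows "restr 0 1 \<gamma> = \<gamma>"
proof -
  have clamped: "apply_bcontfun \<gamma> t = apply_bcontfun \<gamma> (clamp01 t)" for t
    using assms unfolding Geo_def by blast
  have "apply_bcontfun \<gamma> (clamp01 t * 1 + (1 - clamp01 t) * 0) = apply_bcontfun \<gamma> t" for t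
    by (simp add: clamped[of t])
  then show ?thesis
    unfolding restr_def by (simp add: apply_bcontfun_inverse)
qed

lemma apply_reverse_geo: "apply_bcontfun (reverse_geo \<gamma>) s = apply_bcontfun \<gamma> (1 - s)"
proof -
  have "(\<lambda>t. apply_bcontfun \<gamma> (1 - t)) \<in> bcontfun"
    unfolding bcontfun_def
  proof (intro CollectI conjI)
    show "continuous_on UNIV (\<lambda>t. apply_bcontfun \<gamma> (1 - t))"
      by (rule continuous_on_compose2[OF continuous_on_apply_bcontfun]) (auto intro: continuous_intros)
    show "bounded (range (\<lambda>t. apply_bcontfun \<gamma> (1 - t)))"
      by (rule bounded_subset[OF bounded_apply_bcontfun]) auto
  qed
  then show ?thesis
    unfolding reverse_geo_def by (simp only: Bcontfun_inverse)
qed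

lemma eval_at_reverse_geo: "eval_at s (reverse_geo \<gamma>) = eval_at (1 - s) \<gamma>"
  by (simp add: eval_at_def apply_reverse_geo)

lemma reverse_geo_Geo:
  assumes g: "\<gamma> \<in> Geo"
  shows "reverse_geo \<gamma> \<in> Geo"
  unfolding Geo_def mem_Collect_eq
proof (intro conjI allI ballI)
  fix t :: real
  have "clamp01 (1 - t) = 1 - clamp01 t"
    unfolding clamp01_def by linarith
  moreover have "apply_bcontfun \<gamma> (1 - t) = apply_bcontfun \<gamma> (clamp01 (1 - t))"
    using g unfolding Geo_def by blast
  ultimately show "apply_bcontfun (reverse_geo \<gamma>) t = apply_bcontfun (reverse_geo \<gamma>) (clamp01 t)"
    by (simp add: apply_reverse_geo)
next
  fix s t :: real
  assume "s \<in> {0..1}" "t \<in> {0..1}"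
  then have "dist (eval_at (1 - s) \<gamma>) (eval_at (1 - t) \<gamma>) = \<bar>s - t\<bar> * dist (eval_at 1 \<gamma>) (eval_at 0 \<gamma>)"
    using Geo_dist[OF g, of "1 - s" "1 - t"] by (simp add: dist_commute abs_minus_commute)
  then show "dist (apply_bcontfun (reverse_geo \<gamma>) s) (apply_bcontfun (reverse_geo \<gamma>) t)
      = \<bar>s - t\<bar> * dist (apply_bcontfun (reverse_geo \<gamma>) 0) (apply_bcontfun (reverse_geo \<gamma>) 1)"
    by (simp add: apply_reverse_geo eval_at_def)
qed

lemma measurable_reverse_geo:
  "reverse_geo \<in> measurable (GeoM :: (real \<Rightarrow>\<^sub>C 'a::metric_space) measure) GeoM"
proof -
  have "continuous_on UNIV (reverse_geo :: (real \<Rightarrow>\<^sub>C 'a) \<Rightarrow> _)"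
  proof (clarsimp simp: continuous_on_iff)
    fix \<gamma> :: "real \<Rightarrow>\<^sub>C 'a" and e :: real
    assume "0 < e"
    have "dist (reverse_geo \<delta>) (reverse_geo \<gamma>) \<le> dist \<delta> \<gamma>" for \<delta>
      by (rule dist_bound) (simp add: apply_reverse_geo dist_bounded)
    then show "\<exists>d>0. \<forall>\<delta>. dist \<delta> \<gamma> < d \<longrightarrow> dist (reverse_geo \<delta>) (reverse_geo \<gamma>) < e"
      using \<open>0 < e\<close> le_less_trans by blast
  qed
  then show ?thesis
    unfolding GeoM_def
    by (auto intro!: measurable_restrict_space3 borel_measurable_continuous_onI reverse_geo_Geo)
qed

lemma measurable_reverse_geo_plan:
  "sets P = sets GeoM \<Longrightarrow> reverse_geo \<in> measurable P GeoM"
  using measurable_cong_sets measurable_reverse_geo by blast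

lemma prob_space_plan_inv:
  "prob_space P \<Longrightarrow> sets P = sets GeoM \<Longrightarrow> prob_space (plan_inv P)"
  unfolding plan_inv_def by (rule prob_space.prob_space_distr[OF _ measurable_reverse_geo_plan])

lemma distr_plan_inv_eval_at:
  assumes "sets P = sets GeoM"
  shows "distr (plan_inv P) borel (eval_at s) = distr P borel (eval_at (1 - s))"
proof -
  have "distr (plan_inv P) borel (eval_at s) = distr P borel (eval_at s \<circ> reverse_geo)"
    unfolding plan_inv_def
    by (rule distr_distr[OF measurable_eval_at_GeoM measurable_reverse_geo_plan[OF assms]])
  also have "\<dots> = distr P borel (eval_at (1 - s))"
    by (rule distr_cong) (simp_all add: eval_at_reverse_geo)
  finally show ?thesis .
qed

lemma AE_plan_inv:
  assumes "sets P = sets GeoM" and "{\<gamma> \<in> Geo. \<phi> \<gamma>} \<in> sets GeoM"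
    and "AE \<gamma> in P. \<phi> (reverse_geo \<gamma>)"
  shows "AE \<gamma> in plan_inv P. \<phi> \<gamma>"
  using assms unfolding plan_inv_def
  by (subst AE_distr_iff[OF measurable_reverse_geo_plan]) simp_all

lemma OptGeo_marginals:
  fixes \<pi> :: "(real \<Rightarrow>\<^sub>C 'a::polish_space) measure"
  assumes "OptGeo \<mu>0 \<mu>1 \<pi>"
  shows "\<mu>0 = distr \<pi> borel (eval_at 0)" and "\<mu>1 = distr \<pi> borel (eval_at 1)"
proof -
  have "(\<lambda>\<gamma>. (eval_at 0 \<gamma>, eval_at 1 \<gamma>)) \<in> borel_measurable \<pi>"
    using assms unfolding OptGeo_def by (auto intro: measurable_eval_at_plan)
  moreover have "fst \<in> borel_measurable (borel :: ('a \<times> 'a) measure)"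
    and "snd \<in> borel_measurable (borel :: ('a \<times> 'a) measure)"
    by (auto intro!: borel_measurable_continuous_onI continuous_intros)
  ultimately show "\<mu>0 = distr \<pi> borel (eval_at 0)" and "\<mu>1 = distr \<pi> borel (eval_at 1)"
    using assms unfolding OptGeo_def optimal_coupling_def coupling_def
    by (simp_all add: distr_distr comp_def)
qed

lemma P2_eval_at:
  fixes \<pi> :: "(real \<Rightarrow>\<^sub>C 'a::polish_space) measure"
  assumes \<pi>: "prob_space \<pi>" and sp: "sets \<pi> = sets GeoM"
    and P2_0: "P2 (distr \<pi> borel (eval_at 0))" and P2_1: "P2 (distr \<pi> borel (eval_at 1))"
    and t: "t \<in> {0..1}"
  shows "P2 (distr \<pi> borel (eval_at t))"
proof -
  have [measurable]: "eval_at s \<in> borel_measurable \<pi>" for s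
    using sp by (rule measurable_eval_at_plan)
  have moment: "(\<integral>\<^sup>+ x. ennreal ((dist x c)\<^sup>2) \<partial>distr \<pi> borel (eval_at s))
      = (\<integral>\<^sup>+ \<gamma>. ennreal ((dist (eval_at s \<gamma>) c)\<^sup>2) \<partial>\<pi>)" for s c
    by (rule nn_integral_distr) measurable
  obtain a where a: "(\<integral>\<^sup>+ \<gamma>. ennreal ((dist (eval_at 0 \<gamma>) a)\<^sup>2) \<partial>\<pi>) < \<infinity>"
    using P2_0 unfolding P2_def moment by blast
  obtain b where b: "(\<integral>\<^sup>+ \<gamma>. ennreal ((dist (eval_at 1 \<gamma>) b)\<^sup>2) \<partial>\<pi>) < \<infinity>"
    using P2_1 unfolding P2_def moment by blast
  have "(\<integral>\<^sup>+ x. ennreal ((dist x a)\<^sup>2) \<partial>distr \<pi> borel (eval_at t))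
      = (\<integral>\<^sup>+ \<gamma>. ennreal ((dist (eval_at t \<gamma>) a)\<^sup>2) \<partial>\<pi>)"
    by (rule moment)
  also have "\<dots> \<le> (\<integral>\<^sup>+ \<gamma>. 6 * ennreal ((dist (eval_at 0 \<gamma>) a)\<^sup>2)
      + 6 * ennreal ((dist (eval_at 1 \<gamma>) b)\<^sup>2) + 6 * ennreal ((dist a b)\<^sup>2) \<partial>\<pi>)"
  proof (rule nn_integral_mono)
    fix \<gamma>
    assume "\<gamma> \<in> space \<pi>"
    then have "ennreal ((dist (eval_at t \<gamma>) a)\<^sup>2) \<le> ennreal (6 * (dist (eval_at 0 \<gamma>) a)\<^sup>2
        + 6 * (dist (eval_at 1 \<gamma>) b)\<^sup>2 + 6 * (dist a b)\<^sup>2)"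
      using Geo_dist_eval_at_sq_le[OF _ t] sets_eq_imp_space_eq[OF sp] by (intro ennreal_leI) simp
    then show "ennreal ((dist (eval_at t \<gamma>) a)\<^sup>2) \<le> 6 * ennreal ((dist (eval_at 0 \<gamma>) a)\<^sup>2)
        + 6 * ennreal ((dist (eval_at 1 \<gamma>) b)\<^sup>2) + 6 * ennreal ((dist a b)\<^sup>2)"
      by (simp add: ennreal_plus ennreal_mult)
  qed
  also have "\<dots> = 6 * (\<integral>\<^sup>+ \<gamma>. ennreal ((dist (eval_at 0 \<gamma>) a)\<^sup>2) \<partial>\<pi>)
      + 6 * (\<integral>\<^sup>+ \<gamma>. ennreal ((dist (eval_at 1 \<gamma>) b)\<^sup>2) \<partial>\<pi>) + 6 * ennreal ((dist a b)\<^sup>2)"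
    using prob_space.emeasure_space_1[OF \<pi>] by (simp add: nn_integral_add nn_integral_cmult)
  also have "\<dots> < \<infinity>"
    using a b by (simp add: ennreal_mult_less_top ennreal_add_less_top)
  finally show ?thesis
    using prob_space_distr_eval_at[OF \<pi> sp] unfolding P2_def prob_borel_def by auto
qed

section \<open>Conditioned plans\<close>

definition cond_measure :: "'b measure \<Rightarrow> 'b set \<Rightarrow> 'b measure" where
  "cond_measure M E = density M (\<lambda>x. ennreal (indicator E x / measure M E))"

lemma sets_cond_measure [simp]: "sets (cond_measure M E) = sets M"
  and space_cond_measure [simp]: "space (cond_measure M E) = space M"
  by (simp_all add: cond_measure_def)

lemma emeasure_cond_measure:
  assumes "E \<in> sets M" and "X \<in> sets M"
  shows "emeasure (cond_measure M E) X = ennreal (1 / measure M E) * emeasure M (X \<inter> E)"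
proof -
  have "emeasure (cond_measure M E) X = (\<integral>\<^sup>+ x. ennreal (1 / measure M E) * indicator (X \<inter> E) x \<partial>M)"
    unfolding cond_measure_def using assms
    by (subst emeasure_density) (auto intro!: nn_integral_cong simp: indicator_def)
  also have "\<dots> = ennreal (1 / measure M E) * emeasure M (X \<inter> E)"
    using assms by (simp add: nn_integral_cmult_indicator)
  finally show ?thesis .
qed

lemma emeasure_cond_measure_self:
  assumes "E \<in> sets M" and "0 < measure M E"
  shows "ennreal (1 / measure M E) * emeasure M E = 1"
proof -
  have "emeasure M E = ennreal (measure M E)"
    using assms(2) by (metis emeasure_eq_ennreal_measure less_irrefl measure_zero_top)
  then show ?thesis
    using assms(2) by (simp add: ennreal_mult[symmetric])
qed

lemma prob_space_cond_measure:
  assumes "E \<in> sets M" and "0 < measure M E"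
  shows "prob_space (cond_measure M E)"
proof
  have "emeasure (cond_measure M E) (space M) = ennreal (1 / measure M E) * emeasure M E"
    using assms(1) sets.sets_into_space by (subst emeasure_cond_measure) (auto simp: Int_absorb1)
  then show "emeasure (cond_measure M E) (space (cond_measure M E)) = 1"
    using emeasure_cond_measure_self[OF assms] by simp
qed

lemma AE_cond_measure:
  assumes "E \<in> sets M"
  shows "AE x in cond_measure M E. x \<in> E"
  unfolding cond_measure_def using assms
  by (subst AE_density) (auto simp: indicator_def)

lemma emeasure_distr_cond_measure:
  assumes f: "f \<in> borel_measurable M" and E: "E \<in> sets M" and A: "A \<in> sets borel"
  shows "emeasure (distr (cond_measure M E) borel f) A
           = ennreal (1 / measure M E) * emeasure M (f -` A \<inter> space M \<inter> E)"
proof -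
  have "f \<in> borel_measurable (cond_measure M E)"
    using f by (simp add: cond_measure_def)
  then have "emeasure (distr (cond_measure M E) borel f) A = emeasure (cond_measure M E) (f -` A \<inter> space M)"
    using A by (simp add: emeasure_distr)
  also have "\<dots> = ennreal (1 / measure M E) * emeasure M (f -` A \<inter> space M \<inter> E)"
    by (rule emeasure_cond_measure[OF E measurable_sets[OF f A]])
  finally show ?thesis .
qed

lemma ex_emeasure_sublevel_pos:
  assumes A: "A \<in> sets M" "0 < emeasure M A" and [measurable]: "g \<in> borel_measurable M"
  shows "\<exists>n::nat. 0 < emeasure M {x \<in> A. g x \<le> real n}"
proof (rule ccontr)
  assume "\<not> ?thesis"
  then have "{x \<in> A. g x \<le> real n} \<in> null_sets M" for n
    using A(1) by (auto intro!: null_setsI)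
  then have "(\<Union>n. {x \<in> A. g x \<le> real n}) \<in> null_sets M"
    by (rule null_sets_UN)
  moreover have "(\<Union>n. {x \<in> A. g x \<le> real n}) = A"
    using real_arch_simple by blast
  ultimately have "emeasure M A = 0"
    by (metis null_setsD1)
  then show False
    using A(2) by simp
qed

lemma vs_CD_plan_cond_measure:
  assumes vs: "vs_CD_plan m K N \<pi>" and sp: "sets \<pi> = sets GeoM"
    and E: "E \<in> sets \<pi>" and p: "0 < measure \<pi> E" and t: "t \<in> {0..1}"
  defines "P \<equiv> cond_measure \<pi> E"
  shows "Ent m N (distr P borel (eval_at t))
           \<le> ereal (1 - t) * Ent_plan m K N (1 - t) P + ereal t * Ent_plan m K N t (plan_inv P)"
proof -
  define F where "F \<gamma> = indicator E \<gamma> / measure \<pi> E" for \<gamma>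
  have "F \<in> borel_measurable GeoM"
    unfolding F_def using E sp by simp
  moreover have "\<forall>\<gamma>. 0 \<le> F \<gamma>" and "\<forall>\<gamma>. F \<gamma> \<le> 1 / measure \<pi> E"
    using p by (auto simp: F_def indicator_def)
  moreover have "(\<integral>\<^sup>+ \<gamma>. ennreal (F \<gamma>) \<partial>\<pi>) = 1"
  proof -
    have "(\<integral>\<^sup>+ \<gamma>. ennreal (F \<gamma>) \<partial>\<pi>) = (\<integral>\<^sup>+ \<gamma>. ennreal (1 / measure \<pi> E) * indicator E \<gamma> \<partial>\<pi>)"
      by (rule nn_integral_cong) (simp add: F_def indicator_def)
    then show ?thesis
      using E emeasure_cond_measure_self[OF E p] by (simp add: nn_integral_cmult_indicator)
  qed
  ultimately have "Ent m N (distr (distr P GeoM (restr 0 1)) borel (eval_at t))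
      \<le> ereal (1 - t) * Ent_plan m K N (1 - t) (distr P GeoM (restr 0 1))
        + ereal t * Ent_plan m K N t (plan_inv (distr P GeoM (restr 0 1)))"
    using vs t unfolding vs_CD_plan_def P_def cond_measure_def F_def Let_def by fastforce
  moreover have "distr P GeoM (restr 0 1) = P"
  proof -
    have "distr P GeoM (restr 0 1) = distr P GeoM (\<lambda>\<gamma>. \<gamma>)"
      using sets_eq_imp_space_eq[OF sp] by (intro distr_cong) (simp_all add: P_def restr_0_1)
    also have "\<dots> = P"
      using sp by (simp add: P_def distr_id2)
    finally show ?thesis .
  qed
  ultimately show ?thesis by simp
qed

section \<open>Lebesgue decomposition\<close>

lemma locally_finite_borel_sigma_finite:
  fixes m :: "'a::polish_space measure"
  assumes "locally_finite_borel m"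
  shows "sigma_finite_measure m"
proof
  have sm: "sets m = sets borel"
    using assms by (simp add: locally_finite_borel_def)
  define F where "F = {B. \<exists>x e. B = ball x e \<and> emeasure m (ball x e) < \<infinity>}"
  have "\<And>S. S \<in> F \<Longrightarrow> open S"
    unfolding F_def by auto
  then obtain F' where F': "F' \<subseteq> F" "countable F'" "\<Union>F' = \<Union>F"
    using Lindelof[of F] by blast
  have "x \<in> \<Union>F" for x :: 'a
  proof -
    obtain e where "e > 0" "emeasure m (ball x e) < \<infinity>"
      using assms unfolding locally_finite_borel_def by blast
    then have "ball x e \<in> F"
      unfolding F_def by blast
    with \<open>e > 0\<close> show ?thesis
      by (meson UnionI centre_in_ball)
  qed
  then have "\<Union>F' = space m"
    using F'(3) sets_eq_imp_space_eq[OF sm] by auto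
  moreover have "F' \<subseteq> sets m" and "\<forall>a\<in>F'. emeasure m a \<noteq> \<infinity>"
    using F'(1) sm unfolding F_def by auto
  ultimately show "\<exists>A. countable A \<and> A \<subseteq> sets m \<and> \<Union>A = space m \<and> (\<forall>a\<in>A. emeasure m a \<noteq> \<infinity>)"
    using F'(2) by blast
qed

lemma lebesgue_dec_ld:
  assumes "lebesgue_dec m \<mu> \<rho> S"
  shows "lebesgue_dec m \<mu> (ld_rho m \<mu>) (ld_S m \<mu>)"
proof -
  have "lebesgue_dec m \<mu> (fst (\<rho>, S)) (snd (\<rho>, S))"
    using assms by simp
  then show ?thesis
    unfolding ld_rho_def ld_S_def by (rule someI[where P = "\<lambda>p. lebesgue_dec m \<mu> (fst p) (snd p)"])
qed

lemma lebesgue_dec_absolutely_continuous: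
  fixes m :: "'a::topological_space measure"
  assumes "sigma_finite_measure m" and sm: "sets m = sets borel"
    and fin: "finite_measure \<mu>" and s\<mu>: "sets \<mu> = sets borel"
    and ac: "absolutely_continuous m \<mu>"
  shows "lebesgue_dec m \<mu> (ld_rho m \<mu>) (ld_S m \<mu>)"
proof -
  interpret sigma_finite_measure m by fact
  obtain f where f: "f \<in> borel_measurable m" "density m f = \<mu>"
    using Radon_Nikodym[OF ac] s\<mu> sm by auto
  have "integral\<^sup>N m f = emeasure (density m f) (space m)"
    using f(1) by (subst emeasure_density) (auto intro!: nn_integral_cong)
  also have "\<dots> = emeasure \<mu> (space \<mu>)"
    using f(2) sets_eq_imp_space_eq[OF s\<mu>] sets_eq_imp_space_eq[OF sm] by simp
  finally have "integral\<^sup>N m f \<noteq> \<infinity>"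
    using finite_measure.emeasure_finite[OF fin] by simp
  then have ae: "AE x in m. f x \<noteq> \<infinity>"
    using f(1) nn_integral_PInf_AE by blast
  have "emeasure \<mu> A = (\<integral>\<^sup>+ x\<in>A. ennreal (enn2real (f x)) \<partial>m)" if A: "A \<in> sets borel" for A
  proof -
    have "emeasure \<mu> A = (\<integral>\<^sup>+ x\<in>A. f x \<partial>m)"
      using A sm f by (auto simp: emeasure_density)
    also have "\<dots> = (\<integral>\<^sup>+ x\<in>A. ennreal (enn2real (f x)) \<partial>m)"
      by (rule nn_integral_cong_AE) (use ae in \<open>auto simp: less_top\<close>)
    finally show ?thesis .
  qed
  moreover have "f \<in> borel_measurable borel"
    using f(1) measurable_cong_sets[OF sm refl] by blast
  then have "(\<lambda>x. enn2real (f x)) \<in> borel_measurable borel"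
    by measurable
  ultimately have "lebesgue_dec m \<mu> (\<lambda>x. enn2real (f x)) {}"
    unfolding lebesgue_dec_def by simp
  then show ?thesis
    by (rule lebesgue_dec_ld)
qed

lemma lebesgue_dec_singular_null:
  assumes "lebesgue_dec m \<mu> \<rho> S" and "absolutely_continuous m \<mu>" and "sets m = sets borel"
  shows "emeasure \<mu> S = 0"
proof -
  have "S \<in> null_sets m"
    using assms(1,3) unfolding lebesgue_dec_def by auto
  then show ?thesis
    using assms(2) unfolding absolutely_continuous_def by auto
qed

lemma lebesgue_dec_emeasure_le:
  assumes dec: "lebesgue_dec m \<mu> \<rho> S" and S: "emeasure \<mu> S = 0"
    and sm: "sets m = sets borel" and s\<mu>: "sets \<mu> = sets borel" and A: "A \<in> sets borel"
  shows "emeasure \<mu> (A \<inter> {x. \<rho> x \<le> L}) \<le> ennreal L * emeasure m A"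
proof -
  have \<rho>[measurable]: "\<rho> \<in> borel_measurable borel"
    using dec unfolding lebesgue_dec_def by blast
  have A': "A \<inter> {x. \<rho> x \<le> L} \<in> sets borel"
    using A by measurable
  have "emeasure \<mu> (A \<inter> {x. \<rho> x \<le> L} \<inter> S) = 0"
    using S dec s\<mu> unfolding lebesgue_dec_def by (metis emeasure_eq_0 inf_le2)
  moreover have "emeasure \<mu> (A \<inter> {x. \<rho> x \<le> L})
      = (\<integral>\<^sup>+ x\<in>A \<inter> {x. \<rho> x \<le> L}. ennreal (\<rho> x) \<partial>m) + emeasure \<mu> (A \<inter> {x. \<rho> x \<le> L} \<inter> S)"
    using dec A' unfolding lebesgue_dec_def by blast
  ultimately have "emeasure \<mu> (A \<inter> {x. \<rho> x \<le> L}) = (\<integral>\<^sup>+ x\<in>A \<inter> {x. \<rho> x \<le> L}. ennreal (\<rho> x) \<partial>m)"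
    by simp
  also have "\<dots> \<le> (\<integral>\<^sup>+ x. ennreal L * indicator A x \<partial>m)"
    by (intro nn_integral_mono) (auto simp: indicator_def intro!: ennreal_leI)
  also have "\<dots> = ennreal L * emeasure m A"
    using A sm by (simp add: nn_integral_cmult_indicator)
  finally show ?thesis .
qed

lemma lebesgue_dec_density_bound:
  fixes m \<mu> :: "'a::topological_space measure"
  assumes dec: "lebesgue_dec m \<mu> \<rho> S" and "finite_measure \<mu>"
    and sm: "sets m = sets borel" and s\<mu>: "sets \<mu> = sets borel" and c: "0 \<le> c"
    and le: "\<And>A. A \<in> sets borel \<Longrightarrow> emeasure \<mu> A \<le> ennreal c * emeasure m A"
  shows "AE x in m. \<rho> x \<le> c + 1"
proof -
  have [measurable]: "\<rho> \<in> borel_measurable borel"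
    using dec unfolding lebesgue_dec_def by blast
  define A where "A = {x. c + 1 < \<rho> x}"
  have A: "A \<in> sets borel"
    unfolding A_def by measurable
  have "(\<integral>\<^sup>+ x\<in>A. ennreal (c + 1) \<partial>m) \<le> (\<integral>\<^sup>+ x\<in>A. ennreal (\<rho> x) \<partial>m)"
    by (rule nn_integral_mono) (auto simp: A_def indicator_def intro!: ennreal_leI)
  also have "\<dots> \<le> emeasure \<mu> A"
    using dec A unfolding lebesgue_dec_def by (metis le_iff_add)
  finally have lower: "ennreal (c + 1) * emeasure m A \<le> emeasure \<mu> A"
    using A sm by (simp add: nn_integral_cmult_indicator)
  have "emeasure \<mu> A < \<infinity>"
    using finite_measure.emeasure_finite[OF \<open>finite_measure \<mu>\<close>] by (simp add: less_top)
  then have "emeasure m A \<noteq> \<infinity>"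
    using lower c by (auto simp: ennreal_mult_less_top dest: le_less_trans)
  then obtain r where r: "emeasure m A = ennreal r" "0 \<le> r"
    by (cases "emeasure m A") auto
  have "ennreal ((c + 1) * r) \<le> ennreal (c * r)"
    using order.trans[OF lower le[OF A]] r c by (simp add: ennreal_mult)
  then have "r = 0"
    using r c by (simp add: ennreal_le_iff algebra_simps)
  then have "A \<in> null_sets m"
    using r A sm by auto
  then show ?thesis
    by (rule AE_I') (auto simp: A_def)
qed

lemma lebesgue_dec_dominated:
  fixes m \<mu> :: "'a::topological_space measure"
  assumes "sigma_finite_measure m" and sm: "sets m = sets borel"
    and fin: "finite_measure \<mu>" and s\<mu>: "sets \<mu> = sets borel" and "0 \<le> c"
    and le: "\<And>A. A \<in> sets borel \<Longrightarrow> emeasure \<mu> A \<le> ennreal c * emeasure m A"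
  shows "lebesgue_dec m \<mu> (ld_rho m \<mu>) (ld_S m \<mu>)" and "emeasure \<mu> (ld_S m \<mu>) = 0"
    and "AE x in \<mu>. ld_rho m \<mu> x \<le> c + 1"
proof -
  have ac: "absolutely_continuous m \<mu>"
    unfolding absolutely_continuous_def
  proof
    fix A
    assume "A \<in> null_sets m"
    then have A: "A \<in> sets borel" "emeasure m A = 0"
      using sm by auto
    then have "emeasure \<mu> A = 0"
      using le[of A] by simp
    then show "A \<in> null_sets \<mu>"
      using A s\<mu> by auto
  qed
  show dec: "lebesgue_dec m \<mu> (ld_rho m \<mu>) (ld_S m \<mu>)"
    by (rule lebesgue_dec_absolutely_continuous[OF assms(1,2) fin s\<mu> ac])
  show "emeasure \<mu> (ld_S m \<mu>) = 0"
    by (rule lebesgue_dec_singular_null[OF dec ac sm])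
  show "AE x in \<mu>. ld_rho m \<mu> x \<le> c + 1"
  proof (rule absolutely_continuous_AE[OF _ ac])
    show "sets \<mu> = sets m"
      using sm s\<mu> by simp
    show "AE x in m. ld_rho m \<mu> x \<le> c + 1"
      using dec fin sm s\<mu> \<open>0 \<le> c\<close> le by (rule lebesgue_dec_density_bound)
  qed
qed

lemma lebesgue_dec_concentrated:
  assumes s\<mu>: "sets \<mu> = sets borel"
    and B: "B \<in> sets borel" "emeasure m B = 0" and conc: "emeasure \<mu> (UNIV - B) = 0"
  shows "lebesgue_dec m \<mu> (\<lambda>_. 0) B"
proof -
  have "emeasure \<mu> (A \<inter> B) = emeasure \<mu> A" if A: "A \<in> sets borel" for A
  proof -
    have "UNIV - B \<in> null_sets \<mu>"
      using B s\<mu> conc by auto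
    then have "A - B \<in> null_sets \<mu>"
      using A B s\<mu> by (auto intro: null_sets_subset)
    then have "emeasure \<mu> (A - (A - B)) = emeasure \<mu> A"
      using A s\<mu> by (intro emeasure_Diff_null_set) auto
    then show ?thesis
      by (simp add: Diff_Diff_Int)
  qed
  then show ?thesis
    using B unfolding lebesgue_dec_def by simp
qed

lemma lebesgue_dec_concentrated_null:
  fixes m \<mu> :: "'a::topological_space measure"
  assumes sm: "sets m = sets borel" and s\<mu>: "sets \<mu> = sets borel"
    and B: "B \<in> sets borel" "emeasure m B = 0" and conc: "emeasure \<mu> (UNIV - B) = 0"
  shows "AE x in m. ld_rho m \<mu> x = 0" and "emeasure \<mu> B \<le> emeasure \<mu> (ld_S m \<mu>)"
proof -
  have dec: "lebesgue_dec m \<mu> (ld_rho m \<mu>) (ld_S m \<mu>)"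
    using lebesgue_dec_concentrated[OF s\<mu> B conc] by (rule lebesgue_dec_ld)
  then have [measurable]: "ld_rho m \<mu> \<in> borel_measurable borel" "ld_S m \<mu> \<in> sets borel"
    and S: "emeasure m (ld_S m \<mu>) = 0" and \<rho>_nonneg: "\<And>x. 0 \<le> ld_rho m \<mu> x"
    unfolding lebesgue_dec_def by auto
  have AE_B: "AE x in m. x \<notin> B" and AE_S: "AE x in m. x \<notin> ld_S m \<mu>"
    using B S sm by (auto intro!: AE_not_in)
  define A where "A = UNIV - B - ld_S m \<mu>"
  have A: "A \<in> sets borel"
    unfolding A_def using B by measurable
  have "(\<integral>\<^sup>+ x. ennreal (ld_rho m \<mu> x) * indicator A x \<partial>m) \<le> emeasure \<mu> A"
    using dec A unfolding lebesgue_dec_def by (metis le_iff_add)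
  also have "\<dots> \<le> emeasure \<mu> (UNIV - B)"
    using B s\<mu> by (intro emeasure_mono) (auto simp: A_def)
  finally have "(\<integral>\<^sup>+ x. ennreal (ld_rho m \<mu> x) * indicator A x \<partial>m) = 0"
    using conc by simp
  then have "AE x in m. ennreal (ld_rho m \<mu> x) * indicator A x = 0"
    using A sm by (subst (asm) nn_integral_0_iff_AE) (auto simp: measurable_cong_sets[OF sm refl])
  with AE_B AE_S show "AE x in m. ld_rho m \<mu> x = 0"
    by eventually_elim (use \<rho>_nonneg in \<open>auto simp: A_def\<close>)
  have "AE x in m. ennreal (ld_rho m \<mu> x) * indicator B x = 0"
    using AE_B by eventually_elim simp
  then have "(\<integral>\<^sup>+ x\<in>B. ennreal (ld_rho m \<mu> x) \<partial>m) = 0"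
    by (rule nn_integral_zero')
  moreover have "emeasure \<mu> B = (\<integral>\<^sup>+ x\<in>B. ennreal (ld_rho m \<mu> x) \<partial>m) + emeasure \<mu> (B \<inter> ld_S m \<mu>)"
    using dec B unfolding lebesgue_dec_def by blast
  ultimately have "emeasure \<mu> B = emeasure \<mu> (B \<inter> ld_S m \<mu>)"
    by simp
  also have "\<dots> \<le> emeasure \<mu> (ld_S m \<mu>)"
    using s\<mu> by (intro emeasure_mono) auto
  finally show "emeasure \<mu> B \<le> emeasure \<mu> (ld_S m \<mu>)" .
qed

lemma emeasure_distr_cond_measure_le:
  fixes m :: "'a::topological_space measure"
  assumes f: "f \<in> borel_measurable M" and E: "E \<in> sets M"
    and sm: "sets m = sets borel" and dec: "lebesgue_dec m (distr M borel f) \<rho> S"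
    and S: "emeasure (distr M borel f) S = 0"
    and bound: "\<And>x. x \<in> E \<Longrightarrow> \<rho> (f x) \<le> L" and L: "0 \<le> L"
    and A: "A \<in> sets borel"
  shows "emeasure (distr (cond_measure M E) borel f) A \<le> ennreal (L / measure M E) * emeasure m A"
proof -
  have [measurable]: "\<rho> \<in> borel_measurable borel"
    using dec unfolding lebesgue_dec_def by blast
  have A': "A \<inter> {y. \<rho> y \<le> L} \<in> sets borel"
    using A by measurable
  have "emeasure M (f -` A \<inter> space M \<inter> E) \<le> emeasure M (f -` (A \<inter> {y. \<rho> y \<le> L}) \<inter> space M)"
    using bound measurable_sets[OF f A'] by (intro emeasure_mono) auto
  also have "\<dots> = emeasure (distr M borel f) (A \<inter> {y. \<rho> y \<le> L})"
    using f A' by (simp add: emeasure_distr)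
  also have "\<dots> \<le> ennreal L * emeasure m A"
    using dec S sm A by (intro lebesgue_dec_emeasure_le) auto
  finally have "emeasure (distr (cond_measure M E) borel f) A
      \<le> ennreal (1 / measure M E) * (ennreal L * emeasure m A)"
    unfolding emeasure_distr_cond_measure[OF f E A] by (rule mult_left_mono) simp
  then show ?thesis
    using L by (simp add: ennreal_mult[symmetric] mult.assoc[symmetric])
qed

section \<open>Entropies\<close>

definition Ent_singular :: "ereal \<Rightarrow> ereal" where
  "Ent_singular N = (if N = \<infinity> then \<infinity> else 0)"

lemma Ent_concentrated_null:
  fixes m \<mu> :: "'a::topological_space measure"
  assumes "sets m = sets borel" and "sets \<mu> = sets borel"
    and "B \<in> sets borel" "emeasure m B = 0" and "emeasure \<mu> (UNIV - B) = 0" and "0 < emeasure \<mu> B"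
  shows "Ent m N \<mu> = Ent_singular N"
proof (cases "N = \<infinity>")
  case True
  then show ?thesis
    using lebesgue_dec_concentrated_null(2)[OF assms(1-5)] assms(6)
    by (auto simp: Ent_def Ent_singular_def dest: order.strict_trans2)
next
  case False
  have "AE x in m. ennreal (ld_rho m \<mu> x powr (1 - 1 / real_of_ereal N)) = 0"
    using lebesgue_dec_concentrated_null(1)[OF assms(1-5)] by eventually_elim simp
  then have "(\<integral>\<^sup>+ x. ennreal (ld_rho m \<mu> x powr (1 - 1 / real_of_ereal N)) \<partial>m) = 0"
    by (rule nn_integral_zero')
  then show ?thesis
    using False by (simp add: Ent_def Ent_singular_def zero_ennreal.rep_eq)
qed

lemma Ent_distr_cond_measure_singular:
  fixes m :: "'a::topological_space measure"
  assumes sm: "sets m = sets borel" and f: "f \<in> borel_measurable M"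
    and E: "E \<in> sets M" "0 < measure M E"
    and B: "B \<in> sets borel" "emeasure m B = 0" and EB: "\<And>x. x \<in> E \<Longrightarrow> f x \<in> B"
  shows "Ent m N (distr (cond_measure M E) borel f) = Ent_singular N"
proof (rule Ent_concentrated_null[OF sm _ B])
  have "f -` (UNIV - B) \<inter> space M \<inter> E = {}" and "f -` B \<inter> space M \<inter> E = E"
    using EB sets.sets_into_space[OF E(1)] by auto
  then show "emeasure (distr (cond_measure M E) borel f) (UNIV - B) = 0"
    and "0 < emeasure (distr (cond_measure M E) borel f) B"
    using emeasure_distr_cond_measure[OF f E(1)] B(1) emeasure_cond_measure_self[OF E] by simp_all
qed simp

lemma measurable_enn_powr [measurable]:
  assumes [measurable]: "f \<in> borel_measurable M"
  shows "(\<lambda>x. enn_powr (f x) p) \<in> borel_measurable M"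
  unfolding enn_powr_def by measurable

lemma measurable_sinh [measurable]:
  assumes [measurable]: "f \<in> borel_measurable M"
  shows "(\<lambda>x. sinh (f x :: real)) \<in> borel_measurable M"
  unfolding sinh_def by measurable

lemma measurable_sigma_KN [measurable]: "sigma_KN K N t \<in> borel_measurable borel"
  unfolding sigma_KN_def by measurable

lemma measurable_beta_KN [measurable]: "beta_KN K N t \<in> borel_measurable borel"
  unfolding beta_KN_def by measurable

lemma enn_powr_pos: "0 < x \<Longrightarrow> 0 < enn_powr x p"
  unfolding enn_powr_def by (auto simp: enn2real_positive_iff less_top enn2real_eq_0_iff)

lemma sigma_KN_pos:
  assumes s: "0 < s" "s < 1" and "0 \<le> \<theta>" and N: "0 < N"
  shows "0 < sigma_KN K N s \<theta>"
proof -
  consider "K = 0 \<or> K * \<theta>\<^sup>2 \<ge> N * pi\<^sup>2 \<or> \<theta> = 0"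
    | "K > 0" "K * \<theta>\<^sup>2 < N * pi\<^sup>2" "\<theta> > 0" | "K < 0" "\<theta> > 0"
    using \<open>0 \<le> \<theta>\<close> by fastforce
  then show ?thesis
  proof cases
    case 1
    with s show ?thesis
      by (auto simp: sigma_KN_def)
  next
    case 2
    define a where "a = \<theta> * sqrt (K / N)"
    have "0 < a"
      unfolding a_def using 2 N by simp
    have "a\<^sup>2 < pi\<^sup>2"
      unfolding a_def using 2 N by (simp add: power_mult_distrib field_simps)
    then have "a < pi"
      by (rule power_less_imp_less_base) simp
    then have "0 < sin (s * a)" and "0 < sin a"
      using \<open>0 < a\<close> s by (auto intro!: sin_gt_zero simp: mult_less_cancel_right1 order.strict_trans2[of _ a])
    then show ?thesis
      using 2 unfolding sigma_KN_def a_def by (simp add: mult.assoc)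
  next
    case 3
    define a where "a = \<theta> * sqrt (- K / N)"
    have "0 < a"
      unfolding a_def using 3 N by (simp add: divide_neg_pos)
    then have "0 < sinh (s * a) / sinh a"
      using s by simp
    then show ?thesis
      using 3 unfolding sigma_KN_def a_def by (simp add: mult.assoc)
  qed
qed

lemma beta_KN_pos:
  assumes "0 < s" "s < 1" and "0 \<le> \<theta>" and "1 < n"
  shows "0 < beta_KN K (ereal n) s \<theta>"
  using assms sigma_KN_pos[of s \<theta> "n - 1" K]
  by (simp add: beta_KN_def ennreal_zero_less_mult_iff enn_powr_pos)

lemma ln_div_beta_KN_infinity_le:
  assumes "0 \<le> \<rho>" "\<rho> \<le> c" and "0 \<le> \<theta>" "\<theta> \<le> L" and "0 < s" "s \<le> 1"
  shows "ln (\<rho> / enn2real (beta_KN K \<infinity> s \<theta>)) \<le> c * exp (\<bar>K\<bar> * L\<^sup>2)"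
proof -
  define x where "x = K / 6 * (1 - s\<^sup>2) * \<theta>\<^sup>2"
  have "0 \<le> 1 - s\<^sup>2" "1 - s\<^sup>2 \<le> 1" and "\<theta>\<^sup>2 \<le> L\<^sup>2"
    using assms by (auto simp: power_le_one power_mono)
  then have "\<bar>x\<bar> = \<bar>K\<bar> / 6 * (1 - s\<^sup>2) * \<theta>\<^sup>2"
    unfolding x_def by (simp add: abs_mult)
  also have "\<dots> \<le> \<bar>K\<bar> * 1 * L\<^sup>2"
    using \<open>1 - s\<^sup>2 \<le> 1\<close> \<open>0 \<le> 1 - s\<^sup>2\<close> \<open>\<theta>\<^sup>2 \<le> L\<^sup>2\<close> by (intro mult_mono) auto
  finally have "\<rho> * exp (- x) \<le> c * exp (\<bar>K\<bar> * L\<^sup>2)"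
    using assms by (intro mult_mono) auto
  moreover have "ln (\<rho> * exp (- x)) \<le> \<rho> * exp (- x)"
    using assms ln_bound[of "\<rho> * exp (- x)"] by (cases "\<rho> = 0") auto
  moreover have "enn2real (beta_KN K \<infinity> s \<theta>) = exp x"
    using assms unfolding beta_KN_def x_def by simp
  ultimately show ?thesis
    by (simp add: exp_minus divide_inverse)
qed

lemma Ent_plan_infinity_less_top:
  fixes m :: "'a::metric_space measure" and Q :: "(real \<Rightarrow>\<^sub>C 'a) measure"
  defines "\<mu>0 \<equiv> distr Q borel (eval_at 0)"
  assumes "finite_measure Q" and S: "emeasure \<mu>0 (ld_S m \<mu>0) = 0" and "\<And>x. 0 \<le> ld_rho m \<mu>0 x"
    and dens: "AE \<gamma> in Q. ld_rho m \<mu>0 (eval_at 0 \<gamma>) \<le> c"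
    and len: "AE \<gamma> in Q. dist (eval_at 0 \<gamma>) (eval_at 1 \<gamma>) \<le> L"
    and "0 < s" "s \<le> 1"
  shows "Ent_plan m K \<infinity> s Q < \<infinity>"
proof -
  let ?f = "\<lambda>\<gamma>. ln (ld_rho m \<mu>0 (eval_at 0 \<gamma>) / enn2real (beta_KN K \<infinity> s (dist (eval_at 0 \<gamma>) (eval_at 1 \<gamma>))))"
  have "(\<integral>\<^sup>+ \<gamma>. ennreal (?f \<gamma>) \<partial>Q) \<le> (\<integral>\<^sup>+ \<gamma>. ennreal (c * exp (\<bar>K\<bar> * L\<^sup>2)) \<partial>Q)"
    using dens len
    by (intro nn_integral_mono_AE, eventually_elim)
      (use assms in \<open>auto intro!: ennreal_leI ln_div_beta_KN_infinity_le\<close>)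
  also have "\<dots> < \<infinity>"
    using finite_measure.emeasure_finite[OF \<open>finite_measure Q\<close>, of "space Q"]
    by (simp add: ennreal_mult_less_top less_top)
  finally have "ext_integral Q ?f < \<infinity>"
    unfolding ext_integral_def
    by (cases "\<integral>\<^sup>+ \<gamma>. ennreal (?f \<gamma>) \<partial>Q"; cases "\<integral>\<^sup>+ \<gamma>. ennreal (- ?f \<gamma>) \<partial>Q") auto
  then show ?thesis
    using S unfolding Ent_plan_def Let_def \<mu>0_def by simp
qed

lemma Ent_plan_finite_neg:
  fixes m :: "'a::polish_space measure" and Q :: "(real \<Rightarrow>\<^sub>C 'a) measure"
  defines "\<mu>0 \<equiv> distr Q borel (eval_at 0)"
  assumes sQ: "sets Q = sets GeoM" and "prob_space Q"
    and dec: "lebesgue_dec m \<mu>0 (ld_rho m \<mu>0) (ld_S m \<mu>0)" and S0: "emeasure \<mu>0 (ld_S m \<mu>0) = 0"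
    and s: "0 < s" "s < 1" and n: "1 < n"
  shows "Ent_plan m K (ereal n) s Q < 0"
proof -
  have [measurable]: "ld_rho m \<mu>0 \<in> borel_measurable borel" and S: "ld_S m \<mu>0 \<in> sets borel"
    using dec unfolding lebesgue_dec_def by auto
  have [measurable]: "eval_at t \<in> borel_measurable Q" for t
    using sQ by (rule measurable_eval_at_plan)
  define g where "g \<gamma> = (if eval_at 0 \<gamma> \<in> ld_S m \<mu>0 then 0 else
      enn_powr (beta_KN K (ereal n) s (dist (eval_at 0 \<gamma>) (eval_at 1 \<gamma>))) (1 / n) *
      (if ld_rho m \<mu>0 (eval_at 0 \<gamma>) = 0 then \<top> else ennreal (ld_rho m \<mu>0 (eval_at 0 \<gamma>) powr (- 1 / n))))"
    for \<gamma>
  have [measurable]: "g \<in> borel_measurable Q"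
    using S unfolding g_def by measurable
  have pos: "enn_powr (beta_KN K (ereal n) s (dist x y)) (1 / n) \<noteq> 0" for x y :: 'a
    using enn_powr_pos[OF beta_KN_pos[OF s zero_le_dist[of x y] n, of K], of "1 / n"] by simp
  have "AE x in \<mu>0. x \<notin> ld_S m \<mu>0"
    using S0 S unfolding \<mu>0_def by (intro AE_not_in null_setsI) auto
  then have AE_S: "AE \<gamma> in Q. eval_at 0 \<gamma> \<notin> ld_S m \<mu>0"
    unfolding \<mu>0_def by (rule AE_distrD[rotated]) measurable
  have g_nonzero: "g \<gamma> \<noteq> 0" if "eval_at 0 \<gamma> \<notin> ld_S m \<mu>0" for \<gamma>
  proof -
    have "0 \<le> ld_rho m \<mu>0 (eval_at 0 \<gamma>)"
      using dec unfolding lebesgue_dec_def by blast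
    then have "(if ld_rho m \<mu>0 (eval_at 0 \<gamma>) = 0 then \<top>
        else ennreal (ld_rho m \<mu>0 (eval_at 0 \<gamma>) powr (- 1 / n))) \<noteq> 0"
      by auto
    then show ?thesis
      using that pos unfolding g_def by (simp only: if_False mult_eq_0_iff) blast
  qed
  have "(\<integral>\<^sup>+ \<gamma>. g \<gamma> \<partial>Q) \<noteq> 0"
  proof
    assume "(\<integral>\<^sup>+ \<gamma>. g \<gamma> \<partial>Q) = 0"
    then have "AE \<gamma> in Q. g \<gamma> = 0"
      by (simp add: nn_integral_0_iff_AE)
    with AE_S have "AE \<gamma> in Q. False"
      by eventually_elim (use g_nonzero in blast)
    then show False
      using prob_space.AE_False[OF \<open>prob_space Q\<close>] by blast
  qed
  then have "0 < enn2ereal (\<integral>\<^sup>+ \<gamma>. g \<gamma> \<partial>Q)"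
    using less_ennreal.rep_eq[of 0] zero_ennreal.rep_eq by (simp add: zero_less_iff_neq_zero)
  moreover have "Ent_plan m K (ereal n) s Q = - enn2ereal (\<integral>\<^sup>+ \<gamma>. g \<gamma> \<partial>Q)"
    unfolding Ent_plan_def Let_def g_def \<mu>0_def real_of_ereal.simps by simp
  ultimately show ?thesis
    by (simp add: ereal_uminus_less_reorder)
qed

lemma Ent_plan_less_Ent_singular:
  fixes m :: "'a::polish_space measure" and Q :: "(real \<Rightarrow>\<^sub>C 'a) measure"
  defines "\<mu>0 \<equiv> distr Q borel (eval_at 0)"
  assumes sf: "sigma_finite_measure m" and sm: "sets m = sets borel"
    and Q: "prob_space Q" and sQ: "sets Q = sets GeoM"
    and c: "0 \<le> c" and dom: "\<And>A. A \<in> sets borel \<Longrightarrow> emeasure \<mu>0 A \<le> ennreal c * emeasure m A"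
    and len: "AE \<gamma> in Q. dist (eval_at 0 \<gamma>) (eval_at 1 \<gamma>) \<le> L"
    and N: "1 < N" and s: "0 < s" "s < 1"
  shows "Ent_plan m K N s Q < Ent_singular N"
proof -
  have eval_Q: "eval_at 0 \<in> borel_measurable Q"
    using sQ by (rule measurable_eval_at_plan)
  have "finite_measure \<mu>0" and "sets \<mu>0 = sets borel"
    unfolding \<mu>0_def using Q eval_Q by (auto intro: prob_space.finite_measure prob_space.prob_space_distr)
  then have \<mu>0: "lebesgue_dec m \<mu>0 (ld_rho m \<mu>0) (ld_S m \<mu>0)" "emeasure \<mu>0 (ld_S m \<mu>0) = 0"
    "AE x in \<mu>0. ld_rho m \<mu>0 x \<le> c + 1"
    using lebesgue_dec_dominated[OF sf sm _ _ c] dom by blast+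
  show ?thesis
  proof (cases "N = \<infinity>")
    case True
    have "AE \<gamma> in Q. ld_rho m \<mu>0 (eval_at 0 \<gamma>) \<le> c + 1"
      using \<mu>0(3) unfolding \<mu>0_def by (rule AE_distrD[OF eval_Q])
    moreover have "0 \<le> ld_rho m \<mu>0 x" for x
      using \<mu>0(1) unfolding lebesgue_dec_def \<mu>0_def by blast
    ultimately have "Ent_plan m K \<infinity> s Q < \<infinity>"
      using \<mu>0(2) Q len s unfolding \<mu>0_def
      by (intro Ent_plan_infinity_less_top) (auto simp: prob_space.finite_measure)
    then show ?thesis
      using True by (simp add: Ent_singular_def)
  next
    case False
    then obtain n where "N = ereal n" "1 < n"
      using N by (cases N) auto
    then show ?thesis
      using Ent_plan_finite_neg[OF sQ Q \<mu>0(1,2)[unfolded \<mu>0_def] s] by (simp add: Ent_singular_def)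
  qed
qed

lemma ereal_convex_comb_less:
  fixes x y v :: ereal
  assumes "x < v" "y < v" and "0 < t" "t < 1"
  shows "ereal (1 - t) * x + ereal t * y < v"
proof (cases v)
  case (real r)
  have "(1 - t) * a + t * b < r" if "a < r" "b < r" for a b
  proof -
    have "(1 - t) * a \<le> (1 - t) * r" and "t * b < t * r"
      using that assms(3,4) by auto
    then show ?thesis
      by (simp add: algebra_simps)
  qed
  with assms real show ?thesis
    by (cases x; cases y) auto
next
  case PInf
  with assms show ?thesis
    by (cases x; cases y) auto
qed (use assms in auto)

lemma Ent_plan_cond_measure_less:
  fixes m :: "'a::polish_space measure" and \<pi> :: "(real \<Rightarrow>\<^sub>C 'a) measure"
    and E :: "(real \<Rightarrow>\<^sub>C 'a) set"
  defines "P \<equiv> cond_measure \<pi> E"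
  assumes sm: "sets m = sets borel" and sf: "sigma_finite_measure m"
    and \<pi>: "prob_space \<pi>" and sp: "sets \<pi> = sets GeoM"
    and ac: "\<And>s. s \<in> {0, 1} \<Longrightarrow> absolutely_continuous m (distr \<pi> borel (eval_at s))"
    and E: "E \<in> sets \<pi>" "0 < measure \<pi> E"
    and dens: "\<And>s \<gamma>. s \<in> {0, 1} \<Longrightarrow> \<gamma> \<in> E \<Longrightarrow> ld_rho m (distr \<pi> borel (eval_at s)) (eval_at s \<gamma>) \<le> L"
    and len: "\<And>\<gamma>. \<gamma> \<in> E \<Longrightarrow> dist (eval_at 0 \<gamma>) (eval_at 1 \<gamma>) \<le> L"
    and L: "0 \<le> L" and N: "1 < N" and t: "0 < t" "t < 1"
  shows "ereal (1 - t) * Ent_plan m K N (1 - t) P + ereal t * Ent_plan m K N t (plan_inv P)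
           < Ent_singular N"
proof -
  have P: "prob_space P" "sets P = sets GeoM"
    unfolding P_def using prob_space_cond_measure[OF E] sp by auto
  have dom: "emeasure (distr P borel (eval_at s)) A \<le> ennreal (L / measure \<pi> E) * emeasure m A"
    if s: "s \<in> {0, 1}" and A: "A \<in> sets borel" for s A
  proof -
    have "finite_measure (distr \<pi> borel (eval_at s))"
      by (rule prob_space.finite_measure[OF prob_space_distr_eval_at[OF \<pi> sp]])
    note dec = lebesgue_dec_absolutely_continuous[OF sf sm this _ ac[OF s]]
    show ?thesis
      unfolding P_def
    proof (rule emeasure_distr_cond_measure_le[OF measurable_eval_at_plan[OF sp] E(1) sm])
      show "lebesgue_dec m (distr \<pi> borel (eval_at s)) (ld_rho m (distr \<pi> borel (eval_at s)))
          (ld_S m (distr \<pi> borel (eval_at s)))"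
        using dec by simp
      then show "emeasure (distr \<pi> borel (eval_at s)) (ld_S m (distr \<pi> borel (eval_at s))) = 0"
        using ac[OF s] sm by (rule lebesgue_dec_singular_null)
    qed (use s A L dens in auto)
  qed
  have "AE \<gamma> in P. \<gamma> \<in> E"
    unfolding P_def using E(1) by (rule AE_cond_measure)
  then have len_P: "AE \<gamma> in P. dist (eval_at 0 \<gamma>) (eval_at 1 \<gamma>) \<le> L"
    by eventually_elim (rule len)
  have "Ent_plan m K N (1 - t) P < Ent_singular N"
    using E L dom[of 0] t
    by (intro Ent_plan_less_Ent_singular[OF sf sm P _ _ len_P N, where c = "L / measure \<pi> E"]) auto
  moreover have "Ent_plan m K N t (plan_inv P) < Ent_singular N"
  proof (rule Ent_plan_less_Ent_singular[where c = "L / measure \<pi> E"])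
    show "prob_space (plan_inv P)"
      using P by (rule prob_space_plan_inv)
    show "sets (plan_inv P) = sets GeoM"
      by (simp add: plan_inv_def)
    show "emeasure (distr (plan_inv P) borel (eval_at 0)) A \<le> ennreal (L / measure \<pi> E) * emeasure m A"
      if "A \<in> sets borel" for A
      using dom[of 1 A] that by (simp add: distr_plan_inv_eval_at[OF P(2)])
    show "AE \<gamma> in plan_inv P. dist (eval_at 0 \<gamma>) (eval_at 1 \<gamma>) \<le> L"
    proof (rule AE_plan_inv[OF P(2)])
      show "{\<gamma> \<in> Geo. dist (eval_at 0 \<gamma> :: 'a) (eval_at 1 \<gamma>) \<le> L} \<in> sets GeoM"
        unfolding space_GeoM[symmetric] by measurable
      show "AE \<gamma> in P. dist (eval_at 0 (reverse_geo \<gamma>)) (eval_at 1 (reverse_geo \<gamma>)) \<le> L"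
        using len_P by (simp add: eval_at_reverse_geo dist_commute)
    qed
  qed (use sf sm N t E L in auto)
  ultimately show ?thesis
    using t by (rule ereal_convex_comb_less)
qed

lemma vs_CD_plan_absolutely_continuous:
  fixes m :: "'a::polish_space measure" and \<pi> :: "(real \<Rightarrow>\<^sub>C 'a) measure"
  assumes sm: "sets m = sets borel" and sf: "sigma_finite_measure m"
    and \<pi>: "prob_space \<pi>" and sp: "sets \<pi> = sets GeoM"
    and ac: "\<And>s. s \<in> {0, 1} \<Longrightarrow> absolutely_continuous m (distr \<pi> borel (eval_at s))"
    and vs: "vs_CD_plan m K N \<pi>" and N: "1 < N" and t: "0 < t" "t < 1"
  shows "absolutely_continuous m (distr \<pi> borel (eval_at t))"
proof (rule ccontr)
  assume "\<not> ?thesis"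
  then obtain B where B: "B \<in> sets borel" "emeasure m B = 0"
    and "emeasure (distr \<pi> borel (eval_at t)) B \<noteq> 0"
    using sm unfolding absolutely_continuous_def null_sets_def by auto
  have [measurable]: "eval_at s \<in> borel_measurable \<pi>" for s
    using sp by (rule measurable_eval_at_plan)
  then have "0 < emeasure \<pi> (eval_at t -` B \<inter> space \<pi>)"
    using \<open>emeasure (distr \<pi> borel (eval_at t)) B \<noteq> 0\<close> B(1)
    by (simp add: emeasure_distr zero_less_iff_neq_zero)
  define \<rho> where "\<rho> s = ld_rho m (distr \<pi> borel (eval_at s))" for s
  have "\<rho> s \<in> borel_measurable borel" if "s \<in> {0, 1}" for s
    using lebesgue_dec_absolutely_continuous[OF sf sm _ _ ac[OF that]]
      prob_space.finite_measure[OF prob_space_distr_eval_at[OF \<pi> sp]]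
    unfolding lebesgue_dec_def \<rho>_def by simp
  then have [measurable]: "\<rho> 0 \<in> borel_measurable borel" "\<rho> 1 \<in> borel_measurable borel"
    by simp_all
  define g where "g \<gamma> = max (\<rho> 0 (eval_at 0 \<gamma>)) (max (\<rho> 1 (eval_at 1 \<gamma>)) (dist (eval_at 0 \<gamma>) (eval_at 1 \<gamma>)))"
    for \<gamma>
  have Bt: "eval_at t -` B \<inter> space \<pi> \<in> sets \<pi>" and g: "g \<in> borel_measurable \<pi>"
    unfolding g_def using B(1) by measurable
  then obtain n :: nat where n: "0 < emeasure \<pi> {\<gamma> \<in> eval_at t -` B \<inter> space \<pi>. g \<gamma> \<le> n}"
    using ex_emeasure_sublevel_pos[OF _ \<open>0 < emeasure \<pi> (eval_at t -` B \<inter> space \<pi>)\<close>] by blast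
  define E where "E = {\<gamma> \<in> eval_at t -` B \<inter> space \<pi>. g \<gamma> \<le> n}"
  have "E \<in> sets \<pi>"
    unfolding E_def using Bt g by measurable
  moreover have "0 < measure \<pi> E"
    using n unfolding E_def[symmetric]
    by (simp add: finite_measure.emeasure_eq_measure[OF prob_space.finite_measure[OF \<pi>]])
  ultimately have E: "E \<in> sets \<pi>" "0 < measure \<pi> E"
    by simp_all
  have "Ent m N (distr (cond_measure \<pi> E) borel (eval_at t)) = Ent_singular N"
    using sm E B by (intro Ent_distr_cond_measure_singular) (auto simp: E_def)
  moreover have "Ent m N (distr (cond_measure \<pi> E) borel (eval_at t))
      \<le> ereal (1 - t) * Ent_plan m K N (1 - t) (cond_measure \<pi> E)
        + ereal t * Ent_plan m K N t (plan_inv (cond_measure \<pi> E))"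
    using vs sp E t by (intro vs_CD_plan_cond_measure) auto
  moreover have "ereal (1 - t) * Ent_plan m K N (1 - t) (cond_measure \<pi> E)
      + ereal t * Ent_plan m K N t (plan_inv (cond_measure \<pi> E)) < Ent_singular N"
    by (rule Ent_plan_cond_measure_less[OF sm sf \<pi> sp ac E _ _ _ N t, where L = n])
      (auto simp: E_def g_def \<rho>_def)
  ultimately show False
    by (metis leD)
qed

theorem lemma4p1:
  fixes m :: "'a::polish_space measure" and K :: real and N :: ereal
    and \<mu>0 \<mu>1 :: "'a measure" and \<pi> :: "(real \<Rightarrow>\<^sub>C 'a) measure"
  assumes "locally_finite_borel m"
    and "1 < N"
    and "very_strict_CD m K N"
    and "P2ac m \<mu>0" and "P2ac m \<mu>1"
    and "bounded_support \<mu>0" and "bounded_support \<mu>1"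
    and "OptGeo \<mu>0 \<mu>1 \<pi>"
    and "vs_CD_plan m K N \<pi>"
  shows "\<forall>t\<in>{0<..<1}. P2ac m (distr \<pi> borel (eval_at t))"
proof
  fix t :: real
  assume t: "t \<in> {0<..<1}"
  have \<pi>: "prob_space \<pi>" "sets \<pi> = sets GeoM"
    using assms(8) unfolding OptGeo_def by auto
  have ends: "P2ac m (distr \<pi> borel (eval_at 0))" "P2ac m (distr \<pi> borel (eval_at 1))"
    using assms(4,5) by (simp_all add: OptGeo_marginals[OF assms(8), symmetric])
  have "P2 (distr \<pi> borel (eval_at t))"
    by (rule P2_eval_at[OF \<pi>]) (use ends t in \<open>auto simp: P2ac_def\<close>)
  moreover have "absolutely_continuous m (distr \<pi> borel (eval_at t))"
  proof (rule vs_CD_plan_absolutely_continuous[OF _ _ \<pi> _ assms(9,2)])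
    show "sets m = sets borel"
      using assms(1) unfolding locally_finite_borel_def by blast
    show "sigma_finite_measure m"
      using assms(1) by (rule locally_finite_borel_sigma_finite)
    show "absolutely_continuous m (distr \<pi> borel (eval_at s))" if "s \<in> {0, 1}" for s
      using that ends unfolding P2ac_def by blast
  qed (use t in auto)
  ultimately show "P2ac m (distr \<pi> borel (eval_at t))"
    unfolding P2ac_def by blast
qed

end
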